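(* Let $\Bbbk$ be a field, $S=\Bbbk[x_1,\dots,x_n]$, $\mathbf{a}\in\mathbb{N}^n$ with all $a_k\ge1$, and $I\subset S$ a monomial ideal all of whose minimal generators $x^{\mathbf{c}}$ satisfy $\mathbf{c}\preceq\mathbf{a}$. For every $i\in[n]$ and every integer $j$ with $1\le j\le a_i+1$, the squarefree monomial ideals $\mathrm{BM}_{\mathbf{a}+\mathbf{e}_i}(I^{\triangleleft\langle i,j\rangle})$ and $\mathrm{Infl}_{(i,j)}(\mathrm{BM}_{\mathbf{a}}(I))$ (each in a polynomial ring with $|\mathbf{a}|+n+1$ variables) coincide after a suitable bijective identification of the variables of the two polynomial rings.
   Context: $\preceq$ is the componentwise order, $|\mathbf{a}|=\sum_k a_k$, $x^{\mathbf{b}}=\prod_k x_k^{b_k}$, $\mathbf{e}_i$ the $i$-th unit vector. For $m\in\mathbb{Z}$, $\tau_{\langle i,m\rangle}$ fixes coordinates $k\neq i$ and sends $b_i$ to $b_i+1$ if $b_i\ge m$, to $b_i$ otherwise. For $j\ge1$ and $I=(x^{\mathbf{c}_1},\dots,x^{\mathbf{c}_r})$, $I^{\triangleleft\langle i,j\rangle}:=(x^{\tau_{\langle i,j\rangle}(\mathbf{c}_1)},\dots,x^{\tau_{\langle i,j\rangle}(\mathbf{c}_r)})$ (its generators have exponents $\preceq\mathbf{a}+\mathbf{e}_i$). Alexander dual: $I^{\vee\mathbf{a}}=(x^{\mathbf{b}}\mid\mathbf{b}\in\mathbb{N}^n,\ \mathbf{b}\preceq\mathbf{a},\ x^{\mathbf{a}-\mathbf{b}}\notin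 I)$. Let $\tilde S=\Bbbk[x_{k,m}\mid 1\le k\le n,\ 1\le m\le a_k+1]$. For a monomial ideal $J$ of $S$ with generators $x^{\mathbf{b}}$, $\mathbf{b}\preceq\mathbf{a}$, let $\mathrm{pol}_{\mathbf{a}+\mathbf{1}}(J)$ be the ideal of $\tilde S$ generated by $\prod_k x_{k,1}x_{k,2}\cdots x_{k,b_k}$ and $\mathrm{pol}^{\mathbf{a}+\mathbf{1}}(J)$ the ideal generated by $\prod_k x_{k,a_k+1}x_{k,a_k}\cdots x_{k,a_k-b_k+2}$, over the minimal generators $x^{\mathbf{b}}$ of $J$. The Bier–Murai ideal is $$\mathrm{BM}_{\mathbf{a}}(I)=\mathrm{pol}_{\mathbf{a}+\mathbf{1}}(I)+\mathrm{pol}^{\mathbf{a}+\mathbf{1}}(I^{\vee\mathbf{a}})+\Big(\prod_{m=1}^{a_l+1}x_{l,m}\ \Big|\ l=1,\dots,n\Big)\subset\tilde S.$$ For a squarefree monomial ideal $J$ of a polynomial ring $T$ and a variable $y$ of $T$, the inflation $\mathrm{Infl}_y(J)\subset T[y']$ ($y'$ a new variable) is the ideal obtained by replacing $y$ by $y\cdot y'$ in each minimal generator of $J$; $\mathrm{Infl}_{(i,j)}$ denotes inflation at $x_{i,j}$. *)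

theory Defs
  imports Main
begin

text \<open>Monomials in a polynomial ring with variable set V (variables of type 'v) are
  represented by their exponent vectors m :: 'v => nat with support in V.
  A monomial ideal is represented by the set of (exponent vectors of) monomials it contains.
  The coefficient field plays no role for monomial ideals.\<close>

definition monoms :: "'v set \<Rightarrow> ('v \<Rightarrow> nat) set" where
  "monoms V = {m. \<forall>v. v \<notin> V \<longrightarrow> m v = 0}"

definition monomial_ideal :: "'v set \<Rightarrow> ('v \<Rightarrow> nat) set \<Rightarrow> bool" where
  "monomial_ideal V J \<longleftrightarrow> J \<subseteq> monoms V \<and> (\<forall>m\<in>J. \<forall>m'\<in>monoms V. m \<le> m' \<longrightarrow> m' \<in> J)"

definition ideal_gen :: "'v set \<Rightarrow> ('v \<Rightarrow> nat) set \<Rightarrow> ('v \<Rightarrow> nat) set" where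
  "ideal_gen V G = {m \<in> monoms V. \<exists>g\<in>G. g \<le> m}"

definition mingens :: "('v \<Rightarrow> nat) set \<Rightarrow> ('v \<Rightarrow> nat) set" where
  "mingens J = {m \<in> J. \<forall>m'\<in>J. m' \<le> m \<longrightarrow> m' = m}"

definition sqmon :: "'v set \<Rightarrow> 'v \<Rightarrow> nat" where
  "sqmon A = (\<lambda>v. if v \<in> A then 1 else 0)"

text \<open>Variables x_1..x_n of S are indexed 0..n-1; a :: nat => nat with a k = 0 for k >= n.\<close>

definition tau :: "nat \<Rightarrow> nat \<Rightarrow> (nat \<Rightarrow> nat) \<Rightarrow> (nat \<Rightarrow> nat)" where
  "tau i m b = b(i := (if b i \<ge> m then b i + 1 else b i))"

definition triangle :: "nat \<Rightarrow> nat \<Rightarrow> nat \<Rightarrow> (nat \<Rightarrow> nat) set \<Rightarrow> (nat \<Rightarrow> nat) set" where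
  "triangle n i j I = ideal_gen {..<n} (tau i j ` mingens I)"

definition alex_dual :: "nat \<Rightarrow> (nat \<Rightarrow> nat) \<Rightarrow> (nat \<Rightarrow> nat) set \<Rightarrow> (nat \<Rightarrow> nat) set" where
  "alex_dual n a I = ideal_gen {..<n} {b \<in> monoms {..<n}. b \<le> a \<and> (a - b) \<notin> I}"

definition bmvars :: "nat \<Rightarrow> (nat \<Rightarrow> nat) \<Rightarrow> (nat \<times> nat) set" where
  "bmvars n a = {(k, m). k < n \<and> 1 \<le> m \<and> m \<le> a k + 1}"

definition BM :: "nat \<Rightarrow> (nat \<Rightarrow> nat) \<Rightarrow> (nat \<Rightarrow> nat) set \<Rightarrow> ((nat \<times> nat) \<Rightarrow> nat) set" where
  "BM n a I = ideal_gen (bmvars n a)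
     ({sqmon {(k, m). k < n \<and> 1 \<le> m \<and> m \<le> b k} | b. b \<in> mingens I}
      \<union> {sqmon {(k, m). k < n \<and> a k + 2 \<le> m + b k \<and> m \<le> a k + 1} | b. b \<in> mingens (alex_dual n a I)}
      \<union> {sqmon {(l, m). l = l0 \<and> 1 \<le> m \<and> m \<le> a l0 + 1} | l0. l0 < n})"

text \<open>Inflation at variable y: the new variable y' is None, old variables are Some v.
  Each minimal generator g becomes g with y replaced by y*y'.\<close>
definition Infl :: "'v set \<Rightarrow> 'v \<Rightarrow> ('v \<Rightarrow> nat) set \<Rightarrow> ('v option \<Rightarrow> nat) set" where
  "Infl V y J = ideal_gen (Some ` V \<union> {None})
     ((\<lambda>g. (\<lambda>u. case u of None \<Rightarrow> g y | Some v \<Rightarrow> g v)) ` mingens J)"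

definition rename :: "('v \<Rightarrow> 'w) \<Rightarrow> 'v set \<Rightarrow> 'w set \<Rightarrow> ('v \<Rightarrow> nat) set \<Rightarrow> ('w \<Rightarrow> nat) set" where
  "rename \<sigma> V1 V2 J = {m \<in> monoms V2. (\<lambda>v. if v \<in> V1 then m (\<sigma> v) else 0) \<in> J}"

end

theory Submission
  imports Defs
begin

text \<open>The identification of variables sends \<open>x\<^sub>i\<^sub>,\<^sub>j\<^sub>+\<^sub>1\<close> of the larger ring to the new
  inflation variable and shifts \<open>x\<^sub>i\<^sub>,\<^sub>m\<close> (\<open>m > j + 1\<close>) down by one; all other variables are
  kept. Both ideals are generated by squarefree monomials, so it suffices to match the supports
  of their generators. The minimal generators of \<open>I\<^sup>\<triangleleft>\<^sup>\<langle>\<^sup>i\<^sup>,\<^sup>j\<^sup>\<rangle>\<close> are the images of those of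
  \<open>I\<close> under the order embedding \<open>\<tau>\<^sub>\<langle>\<^sub>i\<^sub>,\<^sub>j\<^sub>\<rangle>\<close>, and Alexander duality turns this shift into
  the shift \<open>\<tau>\<^sub>\<langle>\<^sub>i\<^sub>,\<^sub>a\<^sub>i\<^sub>+\<^sub>2\<^sub>-\<^sub>j\<^sub>\<rangle>\<close> of the dual. Under the identification the support of each
  shifted generator becomes exactly the inflated support of the original one.\<close>

lemma exists_mingens_le:
  assumes "finite V" "J \<subseteq> monoms V" "m \<in> J"
  shows "\<exists>g\<in>mingens J. g \<le> m"
  using assms(3)
proof (induction "sum m V" arbitrary: m rule: less_induct)
  case less
  show ?case
  proof (cases "m \<in> mingens J")
    case True
    then show ?thesis by auto
  next
    case False
    then obtain m' where m': "m' \<in> J" "m' \<le> m" "m' \<noteq> m"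
      using less.prems unfolding mingens_def by auto
    then obtain v where "m' v \<noteq> m v"
      by auto
    then have v: "m' v < m v"
      using m'(2) by (simp add: le_fun_def order_less_le)
    have "v \<in> V"
    proof (rule ccontr)
      assume "v \<notin> V"
      then have "m' v = 0" "m v = 0"
        using assms(2) m'(1) less.prems unfolding monoms_def by auto
      then show False
        using v by simp
    qed
    then have "sum m' V < sum m V"
      using v m'(2) assms(1) by (intro sum_strict_mono_ex1) (auto simp: le_fun_def)
    then obtain g where "g \<in> mingens J" "g \<le> m'"
      using less.hyps m'(1) by blast
    then show ?thesis
      using m'(2) by (auto intro: order_trans)
  qed
qed

lemma monomial_ideal_ideal_gen: "monomial_ideal V (ideal_gen V G)"
  unfolding monomial_ideal_def ideal_gen_def by (auto intro: order_trans)

lemma mingens_subset: "mingens J \<subseteq> J"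
  unfolding mingens_def by auto

lemma mem_monomial_ideal_iff_mingens_le:
  assumes "finite V" "monomial_ideal V J" "w \<in> monoms V"
  shows "w \<in> J \<longleftrightarrow> (\<exists>c\<in>mingens J. c \<le> w)"
proof
  assume "w \<in> J"
  then show "\<exists>c\<in>mingens J. c \<le> w"
    using exists_mingens_le[OF assms(1)] assms(2) unfolding monomial_ideal_def by blast
next
  assume "\<exists>c\<in>mingens J. c \<le> w"
  then obtain c where "c \<in> J" "c \<le> w"
    using mingens_subset by blast
  then show "w \<in> J"
    using assms(2,3) unfolding monomial_ideal_def by blast
qed

lemma mingens_ideal_gen_subset:
  assumes "G \<subseteq> monoms V"
  shows "mingens (ideal_gen V G) \<subseteq> G"
proof
  fix x
  assume x: "x \<in> mingens (ideal_gen V G)"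
  then obtain g where g: "g \<in> G" "g \<le> x"
    unfolding mingens_def ideal_gen_def by auto
  then have "g \<in> ideal_gen V G"
    using assms unfolding ideal_gen_def by auto
  then show "x \<in> G"
    using x g unfolding mingens_def by auto
qed

lemma mingens_ideal_gen_image:
  assumes embedding: "\<And>x y. f x \<le> f y \<longleftrightarrow> x \<le> y"
    and "f ` mingens J \<subseteq> monoms V"
  shows "mingens (ideal_gen V (f ` mingens J)) = f ` mingens J"
proof
  show "mingens (ideal_gen V (f ` mingens J)) \<subseteq> f ` mingens J"
    by (rule mingens_ideal_gen_subset[OF assms(2)])
  show "f ` mingens J \<subseteq> mingens (ideal_gen V (f ` mingens J))"
  proof
    fix x
    assume "x \<in> f ` mingens J"
    then obtain c where c: "c \<in> mingens J" "x = f c" by auto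
    have "m' = x" if m': "m' \<in> ideal_gen V (f ` mingens J)" "m' \<le> x" for m'
    proof -
      obtain c' where c': "c' \<in> mingens J" "f c' \<le> m'"
        using m'(1) unfolding ideal_gen_def by auto
      then have "c' \<le> c"
        using m'(2) c embedding by (metis order_trans)
      then have "c' = c"
        using c' c unfolding mingens_def by auto
      then show "m' = x"
        using c c' m'(2) by (auto intro: order_antisym)
    qed
    moreover have "x \<in> ideal_gen V (f ` mingens J)"
      using c assms(2) unfolding ideal_gen_def by auto
    ultimately show "x \<in> mingens (ideal_gen V (f ` mingens J))"
      unfolding mingens_def by auto
  qed
qed

definition infl :: "'v \<Rightarrow> ('v \<Rightarrow> nat) \<Rightarrow> ('v option \<Rightarrow> nat)" where
  "infl y g = (\<lambda>u. case u of None \<Rightarrow> g y | Some v \<Rightarrow> g v)"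

definition infl_set :: "'v \<Rightarrow> 'v set \<Rightarrow> 'v option set" where
  "infl_set y A = {u. case u of None \<Rightarrow> y \<in> A | Some v \<Rightarrow> v \<in> A}"

lemma infl_mono: "g \<le> h \<Longrightarrow> infl y g \<le> infl y h"
  unfolding infl_def le_fun_def by (auto split: option.split)

lemma infl_sqmon: "infl y (sqmon A) = sqmon (infl_set y A)"
  unfolding infl_def sqmon_def infl_set_def by (auto split: option.split)

lemma Infl_ideal_gen:
  assumes "finite V" "G \<subseteq> monoms V"
  shows "Infl V y (ideal_gen V G) = ideal_gen (Some ` V \<union> {None}) (infl y ` G)"
proof -
  have "\<exists>x\<in>mingens (ideal_gen V G). x \<le> g" if "g \<in> G" for g
    using that assms exists_mingens_le[OF assms(1), of "ideal_gen V G" g]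
    by (auto simp: ideal_gen_def)
  then show ?thesis
    using mingens_ideal_gen_subset[OF assms(2)]
    unfolding Infl_def infl_def[symmetric] ideal_gen_def
    by (auto intro: order_trans infl_mono) (meson infl_mono order_trans)
qed

lemma Infl_ideal_gen_sqmon:
  assumes "finite V" "\<forall>A\<in>\<A>. A \<subseteq> V"
  shows "Infl V y (ideal_gen V (sqmon ` \<A>))
       = ideal_gen (Some ` V \<union> {None}) (sqmon ` infl_set y ` \<A>)"
proof -
  have "sqmon ` \<A> \<subseteq> monoms V"
    using assms(2) unfolding sqmon_def monoms_def by fastforce
  then show ?thesis
    by (simp add: Infl_ideal_gen[OF assms(1)] image_image infl_sqmon)
qed

lemma rename_ideal_gen_sqmon:
  assumes "\<forall>A\<in>\<A>. A \<subseteq> V1"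
  shows "rename \<sigma> V1 V2 (ideal_gen V1 (sqmon ` \<A>)) = ideal_gen V2 (sqmon ` image \<sigma> ` \<A>)"
proof -
  have "sqmon A \<le> (\<lambda>v. if v \<in> V1 then m (\<sigma> v) else 0) \<longleftrightarrow> sqmon (\<sigma> ` A) \<le> m"
    if "A \<in> \<A>" for A and m :: "_ \<Rightarrow> nat"
  proof -
    have "sqmon A \<le> (\<lambda>v. if v \<in> V1 then m (\<sigma> v) else 0) \<longleftrightarrow> (\<forall>v\<in>A. 1 \<le> m (\<sigma> v))"
      using that assms unfolding sqmon_def le_fun_def by (auto split: if_splits)
    also have "\<dots> \<longleftrightarrow> sqmon (\<sigma> ` A) \<le> m"
      unfolding sqmon_def le_fun_def by auto
    finally show ?thesis .
  qed
  moreover have "(\<lambda>v. if v \<in> V1 then m (\<sigma> v) else 0) \<in> monoms V1" for m :: "_ \<Rightarrow> nat"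
    unfolding monoms_def by auto
  ultimately show ?thesis
    unfolding rename_def ideal_gen_def by blast
qed

lemma bmvars_finite: "finite (bmvars n a)"
proof -
  have "bmvars n a = (SIGMA k:{..<n}. {1..a k + 1})"
    unfolding bmvars_def by auto
  then show ?thesis by simp
qed

text \<open>\<open>rho m\<close> is the monotone left inverse of the shift \<open>\<tau>\<^sub>\<langle>\<^sub>i\<^sub>,\<^sub>m\<^sub>\<rangle>\<close> on one coordinate.\<close>
definition rho :: "nat \<Rightarrow> nat \<Rightarrow> nat" where
  "rho m t = (if t < m then t else t - 1)"

lemma tau_le_iff:
  assumes "1 \<le> m"
  shows "tau i m c \<le> u \<longleftrightarrow> c \<le> u(i := rho m (u i))"
proof -
  have "tau i m c k \<le> u k \<longleftrightarrow> c k \<le> (u(i := rho m (u i))) k" for k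
    using assms by (auto simp: tau_def rho_def)
  then show ?thesis by (simp add: le_fun_def)
qed

lemma tau_le_tau_iff: "tau i m x \<le> tau i m y \<longleftrightarrow> x \<le> y"
proof -
  have "tau i m x k \<le> tau i m y k \<longleftrightarrow> x k \<le> y k" for k
    by (auto simp: tau_def)
  then show ?thesis by (simp add: le_fun_def)
qed

lemma tau_le_fun_upd_Suc: "c \<le> a \<Longrightarrow> tau i m c \<le> a(i := a i + 1)"
  unfolding tau_def le_fun_def by (auto intro: le_SucI)

lemma fun_upd_monoms: "i < n \<Longrightarrow> x \<in> monoms {..<n} \<Longrightarrow> x(i := t) \<in> monoms {..<n}"
  unfolding monoms_def by auto

lemma tau_monoms: "i < n \<Longrightarrow> x \<in> monoms {..<n} \<Longrightarrow> tau i m x \<in> monoms {..<n}"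
  unfolding tau_def by (rule fun_upd_monoms)

lemma mem_ideal_gen_tau_iff:
  assumes "i < n" "monomial_ideal {..<n} J" "1 \<le> m"
  shows "u \<in> ideal_gen {..<n} (tau i m ` mingens J)
     \<longleftrightarrow> u \<in> monoms {..<n} \<and> u(i := rho m (u i)) \<in> J"
  using mem_monomial_ideal_iff_mingens_le[OF _ assms(2)] fun_upd_monoms[OF assms(1)] assms(3)
  unfolding ideal_gen_def by (auto simp: tau_le_iff)

lemma mingens_ideal_gen_tau:
  assumes "i < n" "mingens J \<subseteq> monoms {..<n}"
  shows "mingens (ideal_gen {..<n} (tau i m ` mingens J)) = tau i m ` mingens J"
  using assms by (intro mingens_ideal_gen_image tau_le_tau_iff) (auto intro: tau_monoms)

lemma mingens_triangle:
  assumes "i < n" "monomial_ideal {..<n} I"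
  shows "mingens (triangle n i j I) = tau i j ` mingens I"
  unfolding triangle_def using assms mingens_subset
  by (intro mingens_ideal_gen_tau) (auto simp: monomial_ideal_def)

lemma mem_alex_dual_iff:
  assumes "monomial_ideal {..<n} J" "a \<in> monoms {..<n}"
  shows "u \<in> alex_dual n a J \<longleftrightarrow> u \<in> monoms {..<n} \<and> (\<lambda>k. a k - min (u k) (a k)) \<notin> J"
proof
  assume "u \<in> alex_dual n a J"
  then obtain b where b: "u \<in> monoms {..<n}" "b \<le> a" "a - b \<notin> J" "b \<le> u"
    unfolding alex_dual_def ideal_gen_def by auto
  have "(\<lambda>k. a k - min (u k) (a k)) \<le> a - b"
    using b(2,4) by (auto simp: le_fun_def intro!: diff_le_mono2)
  moreover have "a - b \<in> monoms {..<n}"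
    using assms(2) unfolding monoms_def by auto
  ultimately show "u \<in> monoms {..<n} \<and> (\<lambda>k. a k - min (u k) (a k)) \<notin> J"
    using b assms(1) unfolding monomial_ideal_def by blast
next
  assume u: "u \<in> monoms {..<n} \<and> (\<lambda>k. a k - min (u k) (a k)) \<notin> J"
  define b where "b = (\<lambda>k. min (u k) (a k))"
  have "b \<in> monoms {..<n}" "b \<le> a" "b \<le> u" "a - b = (\<lambda>k. a k - min (u k) (a k))"
    using u unfolding b_def monoms_def le_fun_def by (auto simp: fun_diff_def)
  then show "u \<in> alex_dual n a J"
    using u unfolding alex_dual_def ideal_gen_def by auto
qed

lemma mingens_alex_dual_le: "x \<in> mingens (alex_dual n a J) \<Longrightarrow> x \<le> a"
  using mingens_ideal_gen_subset[of "{b \<in> monoms {..<n}. b \<le> a \<and> a - b \<notin> J}" "{..<n}"]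
  unfolding alex_dual_def by auto

lemma alex_dual_triangle:
  assumes "i < n" "1 \<le> j" "j \<le> a i + 1" "a \<in> monoms {..<n}" "monomial_ideal {..<n} I"
  shows "alex_dual n (a(i := a i + 1)) (triangle n i j I)
       = ideal_gen {..<n} (tau i (a i + 2 - j) ` mingens (alex_dual n a I))"
proof (rule set_eqI)
  fix u
  let ?a' = "a(i := a i + 1)" and ?m = "a i + 2 - j"
  define w where "w = (\<lambda>k. ?a' k - min (u k) (?a' k))"
  have a'_monoms: "?a' \<in> monoms {..<n}"
    using assms(1,4) by (rule fun_upd_monoms)
  then have w_monoms: "w \<in> monoms {..<n}"
    unfolding w_def monoms_def by auto
  txt \<open>Complementing in \<open>a + e\<^sub>i\<close> and then undoing the shift at \<open>j\<close> is the same as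
    undoing the shift at \<open>a\<^sub>i + 2 - j\<close> and then complementing in \<open>a\<close>.\<close>
  have complement_shift: "w(i := rho j (w i)) = (\<lambda>k. a k - min ((u(i := rho ?m (u i))) k) (a k))"
    using assms(2,3) unfolding w_def rho_def fun_eq_iff by auto
  have "u \<in> alex_dual n ?a' (triangle n i j I) \<longleftrightarrow> u \<in> monoms {..<n} \<and> w \<notin> triangle n i j I"
    unfolding w_def triangle_def by (rule mem_alex_dual_iff[OF monomial_ideal_ideal_gen a'_monoms])
  also have "\<dots> \<longleftrightarrow> u \<in> monoms {..<n} \<and> w(i := rho j (w i)) \<notin> I"
    unfolding triangle_def using mem_ideal_gen_tau_iff[OF assms(1,5,2)] w_monoms by auto
  also have "\<dots> \<longleftrightarrow> u \<in> monoms {..<n} \<and> u(i := rho ?m (u i)) \<in> alex_dual n a I"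
    unfolding complement_shift
    using mem_alex_dual_iff[OF assms(5,4)] fun_upd_monoms[OF assms(1)] by auto
  also have "\<dots> \<longleftrightarrow> u \<in> ideal_gen {..<n} (tau i ?m ` mingens (alex_dual n a I))"
    using mem_ideal_gen_tau_iff[OF assms(1), of "alex_dual n a I" ?m] assms(3)
    unfolding alex_dual_def by (auto simp: monomial_ideal_ideal_gen)
  finally show "u \<in> alex_dual n ?a' (triangle n i j I)
      \<longleftrightarrow> u \<in> ideal_gen {..<n} (tau i ?m ` mingens (alex_dual n a I))" .
qed

lemma mingens_alex_dual_triangle:
  assumes "i < n" "1 \<le> j" "j \<le> a i + 1" "a \<in> monoms {..<n}" "monomial_ideal {..<n} I"
  shows "mingens (alex_dual n (a(i := a i + 1)) (triangle n i j I))
       = tau i (a i + 2 - j) ` mingens (alex_dual n a I)"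
proof -
  have "mingens (alex_dual n a I) \<subseteq> monoms {..<n}"
    using mingens_subset monomial_ideal_ideal_gen unfolding alex_dual_def monomial_ideal_def by blast
  then show ?thesis
    unfolding alex_dual_triangle[OF assms] by (rule mingens_ideal_gen_tau[OF assms(1)])
qed

definition pol_lower :: "nat \<Rightarrow> (nat \<Rightarrow> nat) \<Rightarrow> (nat \<times> nat) set" where
  "pol_lower n b = {(k, m). k < n \<and> 1 \<le> m \<and> m \<le> b k}"

definition pol_upper :: "nat \<Rightarrow> (nat \<Rightarrow> nat) \<Rightarrow> (nat \<Rightarrow> nat) \<Rightarrow> (nat \<times> nat) set" where
  "pol_upper n a b = {(k, m). k < n \<and> a k + 2 \<le> m + b k \<and> m \<le> a k + 1}"

definition bm_column :: "(nat \<Rightarrow> nat) \<Rightarrow> nat \<Rightarrow> (nat \<times> nat) set" where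
  "bm_column a l = {(k, m). k = l \<and> 1 \<le> m \<and> m \<le> a l + 1}"

definition bm_faces :: "nat \<Rightarrow> (nat \<Rightarrow> nat) \<Rightarrow> (nat \<Rightarrow> nat) set \<Rightarrow> (nat \<times> nat) set set" where
  "bm_faces n a I = pol_lower n ` mingens I \<union> pol_upper n a ` mingens (alex_dual n a I)
     \<union> bm_column a ` {..<n}"

lemma BM_eq_ideal_gen_sqmon: "BM n a I = ideal_gen (bmvars n a) (sqmon ` bm_faces n a I)"
  unfolding BM_def bm_faces_def image_Un image_image setcompr_eq_image Collect_mem_eq lessThan_def
    pol_lower_def pol_upper_def bm_column_def ..

lemma pol_upper_subset_bmvars:
  assumes "b \<le> a"
  shows "pol_upper n a b \<subseteq> bmvars n a"
proof
  fix v
  assume "v \<in> pol_upper n a b"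
  moreover have "b (fst v) \<le> a (fst v)"
    using assms by (rule le_funD)
  ultimately show "v \<in> bmvars n a"
    unfolding pol_upper_def bmvars_def by (cases v) auto
qed

lemma pol_lower_subset_bmvars:
  assumes "b \<le> a"
  shows "pol_lower n b \<subseteq> bmvars n a"
proof
  fix v
  assume "v \<in> pol_lower n b"
  moreover have "b (fst v) \<le> a (fst v)"
    using assms by (rule le_funD)
  ultimately show "v \<in> bmvars n a"
    unfolding pol_lower_def bmvars_def by (cases v) auto
qed

lemma bm_column_subset_bmvars: "l < n \<Longrightarrow> bm_column a l \<subseteq> bmvars n a"
  unfolding bm_column_def bmvars_def by auto

lemma bm_faces_subset_bmvars:
  assumes "\<forall>c\<in>mingens I. c \<le> a"
  shows "\<forall>A\<in>bm_faces n a I. A \<subseteq> bmvars n a"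
proof
  fix A
  assume "A \<in> bm_faces n a I"
  then consider (lower) c where "c \<in> mingens I" "A = pol_lower n c"
    | (upper) b where "b \<in> mingens (alex_dual n a I)" "A = pol_upper n a b"
    | (column) l where "l < n" "A = bm_column a l"
    unfolding bm_faces_def by auto
  then show "A \<subseteq> bmvars n a"
  proof cases
    case lower
    then show ?thesis
      using assms by (simp add: pol_lower_subset_bmvars)
  next
    case upper
    then show ?thesis
      by (simp add: pol_upper_subset_bmvars mingens_alex_dual_le)
  next
    case column
    then show ?thesis
      by (simp add: bm_column_subset_bmvars)
  qed
qed

definition sig :: "nat \<Rightarrow> nat \<Rightarrow> nat \<times> nat \<Rightarrow> (nat \<times> nat) option" where
  "sig i j v = (if fst v = i \<and> snd v = j + 1 then None
     else if fst v = i \<and> snd v > j + 1 then Some (fst v, snd v - 1) else Some v)"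

definition sig_inv :: "nat \<Rightarrow> nat \<Rightarrow> (nat \<times> nat) option \<Rightarrow> nat \<times> nat" where
  "sig_inv i j w = (case w of None \<Rightarrow> (i, j + 1)
     | Some v \<Rightarrow> if fst v = i \<and> snd v > j then (fst v, snd v + 1) else v)"

lemma sig_sig_inv: "sig i j (sig_inv i j w) = w"
  unfolding sig_def sig_inv_def by (auto split: option.split)

lemma sig_inv_sig: "sig_inv i j (sig i j v) = v"
  unfolding sig_def sig_inv_def by (cases v) auto

lemma sig_mem_iff:
  assumes "i < n" "j \<le> a i + 1"
  shows "sig i j v \<in> Some ` bmvars n a \<union> {None} \<longleftrightarrow> v \<in> bmvars n (a(i := a i + 1))"
  using assms unfolding sig_def bmvars_def by (cases v) (auto simp: image_iff)

lemma bij_betw_sig: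
  assumes "i < n" "j \<le> a i + 1"
  shows "bij_betw (sig i j) (bmvars n (a(i := a i + 1))) (Some ` bmvars n a \<union> {None})"
proof (rule bij_betw_byWitness[where f' = "sig_inv i j"])
  note mem_iff = sig_mem_iff[of i n j a, OF assms]
  show "sig i j ` bmvars n (a(i := a i + 1)) \<subseteq> Some ` bmvars n a \<union> {None}"
    using mem_iff by (auto simp del: Un_iff)
  show "sig_inv i j ` (Some ` bmvars n a \<union> {None}) \<subseteq> bmvars n (a(i := a i + 1))"
  proof
    fix v
    assume "v \<in> sig_inv i j ` (Some ` bmvars n a \<union> {None})"
    then obtain w where "w \<in> Some ` bmvars n a \<union> {None}" "v = sig_inv i j w"
      by (auto simp del: Un_iff)
    then show "v \<in> bmvars n (a(i := a i + 1))"
      using mem_iff sig_sig_inv by metis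
  qed
qed (simp_all add: sig_sig_inv sig_inv_sig)

lemma image_sig_eqI:
  assumes "\<And>v. v \<in> A \<longleftrightarrow> sig i j v \<in> B"
  shows "sig i j ` A = B"
proof
  show "sig i j ` A \<subseteq> B"
    using assms by auto
  show "B \<subseteq> sig i j ` A"
  proof
    fix u
    assume "u \<in> B"
    then have "sig_inv i j u \<in> A"
      by (simp add: assms sig_sig_inv)
    then show "u \<in> sig i j ` A"
      by (metis image_eqI sig_sig_inv)
  qed
qed

lemma image_sig_pol_lower_tau:
  assumes "1 \<le> j"
  shows "sig i j ` pol_lower n (tau i j c) = infl_set (i, j) (pol_lower n c)"
proof (rule image_sig_eqI)
  fix v
  show "v \<in> pol_lower n (tau i j c) \<longleftrightarrow> sig i j v \<in> infl_set (i, j) (pol_lower n c)"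
    using assms by (cases v) (auto simp: sig_def infl_set_def tau_def pol_lower_def)
qed

lemma image_sig_pol_upper_tau:
  assumes "1 \<le> j" "j \<le> a i + 1"
  shows "sig i j ` pol_upper n (a(i := a i + 1)) (tau i (a i + 2 - j) b)
    = infl_set (i, j) (pol_upper n a b)"
proof (rule image_sig_eqI)
  fix v
  show "v \<in> pol_upper n (a(i := a i + 1)) (tau i (a i + 2 - j) b)
      \<longleftrightarrow> sig i j v \<in> infl_set (i, j) (pol_upper n a b)"
    using assms by (cases v) (auto simp: sig_def infl_set_def tau_def pol_upper_def)
qed

lemma image_sig_bm_column:
  assumes "1 \<le> j" "j \<le> a i + 1"
  shows "sig i j ` bm_column (a(i := a i + 1)) l = infl_set (i, j) (bm_column a l)"
proof (rule image_sig_eqI)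
  fix v
  show "v \<in> bm_column (a(i := a i + 1)) l \<longleftrightarrow> sig i j v \<in> infl_set (i, j) (bm_column a l)"
    using assms by (cases v) (auto simp: sig_def infl_set_def bm_column_def)
qed

lemma image_sig_bm_faces_triangle:
  assumes "i < n" "1 \<le> j" "j \<le> a i + 1" "a \<in> monoms {..<n}" "monomial_ideal {..<n} I"
  shows "image (sig i j) ` bm_faces n (a(i := a i + 1)) (triangle n i j I)
       = infl_set (i, j) ` bm_faces n a I"
  unfolding bm_faces_def mingens_triangle[OF assms(1,5)] mingens_alex_dual_triangle[OF assms]
    image_Un image_image
  using image_sig_pol_lower_tau[OF assms(2)] image_sig_pol_upper_tau[where a = a and i = i, OF assms(2,3)]
    image_sig_bm_column[where a = a and i = i, OF assms(2,3)]
  by simp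

theorem proposition5p3:
  fixes n :: nat and a :: "nat \<Rightarrow> nat" and I :: "(nat \<Rightarrow> nat) set" and i j :: nat
  assumes "\<forall>k<n. 1 \<le> a k"
    and "\<forall>k. n \<le> k \<longrightarrow> a k = 0"
    and "monomial_ideal {..<n} I"
    and "\<forall>c\<in>mingens I. c \<le> a"
    and "i < n" and "1 \<le> j" and "j \<le> a i + 1"
  shows "\<exists>\<sigma>. bij_betw \<sigma> (bmvars n (a(i := a i + 1))) (Some ` bmvars n a \<union> {None})
           \<and> rename \<sigma> (bmvars n (a(i := a i + 1))) (Some ` bmvars n a \<union> {None})
               (BM n (a(i := a i + 1)) (triangle n i j I))
             = Infl (bmvars n a) (i, j) (BM n a I)"
proof (intro exI conjI)
  let ?a' = "a(i := a i + 1)"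
  have a_monoms: "a \<in> monoms {..<n}"
    using assms(2) unfolding monoms_def by auto
  have "\<forall>c\<in>mingens (triangle n i j I). c \<le> ?a'"
    unfolding mingens_triangle[OF assms(5,3)] using assms(4) tau_le_fun_upd_Suc by blast
  then have faces': "\<forall>A\<in>bm_faces n ?a' (triangle n i j I). A \<subseteq> bmvars n ?a'"
    by (rule bm_faces_subset_bmvars)
  show "bij_betw (sig i j) (bmvars n ?a') (Some ` bmvars n a \<union> {None})"
    using assms(5,7) by (rule bij_betw_sig)
  show "rename (sig i j) (bmvars n ?a') (Some ` bmvars n a \<union> {None}) (BM n ?a' (triangle n i j I))
      = Infl (bmvars n a) (i, j) (BM n a I)"
    unfolding BM_eq_ideal_gen_sqmon rename_ideal_gen_sqmon[OF faces']
      image_sig_bm_faces_triangle[OF assms(5-7) a_monoms assms(3)]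
      Infl_ideal_gen_sqmon[OF bmvars_finite bm_faces_subset_bmvars[OF assms(4)]] ..
qed

end
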